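(* Let $\mathcal{A}$ be a Banach algebra and $X$ a Banach $\mathcal{A}$-bimodule with left module action $\pi_\ell:\mathcal{A}\times X\to X$. Suppose that $X^*$ factors on the left with respect to $\mathcal{A}$, i.e. every $x'\in X^*$ can be written as $x'=y'a$ for some $y'\in X^*$ and $a\in\mathcal{A}$. If $a\cdot a''\in Z_1(\pi_\ell)$ for all $a\in\mathcal{A}$ and $a''\in\mathcal{A}^{**}$, then $Z_1(\pi_\ell)=\mathcal{A}^{**}$.
   Context: For $x'\in X^*$ and $a\in\mathcal{A}$, $x'a\in X^*$ is defined by $\langle x'a,x\rangle=\langle x',\pi_\ell(a,x)\rangle$. For a bounded bilinear map $m:X_1\times Y\to Z$ between Banach spaces, define $m^*:Z^*\times X_1\to Y^*$ by $\langle m^*(z',x),y\rangle=\langle z',m(x,y)\rangle$, $m^{**}:Y^{**}\times Z^*\to X_1^*$ by $\langle m^{**}(y'',z'),x\rangle=\langle y'',m^*(z',x)\rangle$, and $m^{***}:X_1^{**}\times Y^{**}\to Z^{**}$ by $\langle m^{***}(x'',y''),z'\rangle=\langle x'',m^{**}(y'',z')\rangle$. The first topological center of $\pi_\ell$ is $Z_1(\pi_\ell)=\{a''\in\mathcal{A}^{**}: x''\mapsto\pi_\ell^{***}(a'',x'')\text{ is weak}^*\text{-to-weak}^*\text{ continuous on }X^{**}\}$. $\mathcal{A}^{**}$ carries the first Arens product: for $a,b\in\mathcal{A}$, $a'\in\mathcal{A}^*$, $a'',b''\in\mathcal{A}^{**}$, $\langle a'a,b\rangle=\langle a',ab\rangle$,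 $\langle b''a',a\rangle=\langle b'',a'a\rangle$, $\langle a''\cdot b'',a'\rangle=\langle a'',b''a'\rangle$; $\mathcal{A}$ is embedded canonically in $\mathcal{A}^{**}$. *)

theory Defs
  imports "HOL-Analysis.Analysis"
begin

text \<open>Weak-star topology on a dual space: topology of pointwise convergence
  (the pullback of the product topology under evaluation).\<close>
definition weak_star_topology :: "('b::real_normed_vector \<Rightarrow>\<^sub>L real) topology" where
  "weak_star_topology = pullback_topology UNIV blinfun_apply euclidean"

definition banach_bimodule ::
  "('a::{real_normed_algebra,banach} \<Rightarrow> 'x::banach \<Rightarrow> 'x) \<Rightarrow> ('x \<Rightarrow> 'a \<Rightarrow> 'x) \<Rightarrow> bool" where
  "banach_bimodule pl pr \<longleftrightarrow>
     bounded_bilinear pl \<and> bounded_bilinear pr \<and>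
     (\<forall>a b x. pl (a * b) x = pl a (pl b x)) \<and>
     (\<forall>a b x. pr x (a * b) = pr (pr x a) b) \<and>
     (\<forall>a b x. pl a (pr x b) = pr (pl a x) b)"

definition dual_right_act ::
  "('a \<Rightarrow> 'x::real_normed_vector \<Rightarrow> 'x) \<Rightarrow> ('x \<Rightarrow>\<^sub>L real) \<Rightarrow> 'a \<Rightarrow> ('x \<Rightarrow>\<^sub>L real)" where
  "dual_right_act pl x' a = Blinfun (\<lambda>x. blinfun_apply x' (pl a x))"

definition arens_star ::
  "('x1 \<Rightarrow> 'y::real_normed_vector \<Rightarrow> 'z::real_normed_vector) \<Rightarrow> ('z \<Rightarrow>\<^sub>L real) \<Rightarrow> 'x1 \<Rightarrow> ('y \<Rightarrow>\<^sub>L real)" where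
  "arens_star m z' x = Blinfun (\<lambda>y. blinfun_apply z' (m x y))"

definition arens_star2 ::
  "('x1::real_normed_vector \<Rightarrow> 'y::real_normed_vector \<Rightarrow> 'z::real_normed_vector) \<Rightarrow>
   (('y \<Rightarrow>\<^sub>L real) \<Rightarrow>\<^sub>L real) \<Rightarrow> ('z \<Rightarrow>\<^sub>L real) \<Rightarrow> ('x1 \<Rightarrow>\<^sub>L real)" where
  "arens_star2 m y'' z' = Blinfun (\<lambda>x. blinfun_apply y'' (arens_star m z' x))"

definition arens_star3 ::
  "('x1::real_normed_vector \<Rightarrow> 'y::real_normed_vector \<Rightarrow> 'z::real_normed_vector) \<Rightarrow>
   (('x1 \<Rightarrow>\<^sub>L real) \<Rightarrow>\<^sub>L real) \<Rightarrow> (('y \<Rightarrow>\<^sub>L real) \<Rightarrow>\<^sub>L real) \<Rightarrow> (('z \<Rightarrow>\<^sub>L real) \<Rightarrow>\<^sub>L real)" where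
  "arens_star3 m x'' y'' = Blinfun (\<lambda>z'. blinfun_apply x'' (arens_star2 m y'' z'))"

definition topological_center1 ::
  "('x1::real_normed_vector \<Rightarrow> 'y::real_normed_vector \<Rightarrow> 'z::real_normed_vector) \<Rightarrow>
   (('x1 \<Rightarrow>\<^sub>L real) \<Rightarrow>\<^sub>L real) set" where
  "topological_center1 m = {a''. continuous_map weak_star_topology weak_star_topology
                                    (\<lambda>y''. arens_star3 m a'' y'')}"

definition canon :: "'a::real_normed_vector \<Rightarrow> (('a \<Rightarrow>\<^sub>L real) \<Rightarrow>\<^sub>L real)" where
  "canon a = Blinfun (\<lambda>a'. blinfun_apply a' a)"

definition functional_mult :: "('a::real_normed_algebra \<Rightarrow>\<^sub>L real) \<Rightarrow> 'a \<Rightarrow> ('a \<Rightarrow>\<^sub>L real)" where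
  "functional_mult a' a = Blinfun (\<lambda>b. blinfun_apply a' (a * b))"

definition bidual_functional_mult ::
  "(('a::real_normed_algebra \<Rightarrow>\<^sub>L real) \<Rightarrow>\<^sub>L real) \<Rightarrow> ('a \<Rightarrow>\<^sub>L real) \<Rightarrow> ('a \<Rightarrow>\<^sub>L real)" where
  "bidual_functional_mult b'' a' = Blinfun (\<lambda>a. blinfun_apply b'' (functional_mult a' a))"

definition arens1 ::
  "(('a::real_normed_algebra \<Rightarrow>\<^sub>L real) \<Rightarrow>\<^sub>L real) \<Rightarrow> (('a \<Rightarrow>\<^sub>L real) \<Rightarrow>\<^sub>L real) \<Rightarrow> (('a \<Rightarrow>\<^sub>L real) \<Rightarrow>\<^sub>L real)" where
  "arens1 a'' b'' = Blinfun (\<lambda>a'. blinfun_apply a'' (bidual_functional_mult b'' a'))"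

end

theory Submission
  imports Defs
begin

text \<open>If \<open>x' = y' b\<close>, then \<open>\<langle>\<pi>\<^sub>\<ell>\<^sup>*\<^sup>*\<^sup>*(a'', y''), x'\<rangle> = \<langle>\<pi>\<^sub>\<ell>\<^sup>*\<^sup>*\<^sup>*(b \<cdot> a'', y''), y'\<rangle>\<close>
  by associativity of the module action. Weak-star continuity of \<open>y'' \<mapsto> \<pi>\<^sub>\<ell>\<^sup>*\<^sup>*\<^sup>*(a'', y'')\<close>
  is continuity of each coordinate \<open>x'\<close>, and by the factorization hypothesis every coordinate
  of \<open>a''\<close> is a coordinate of some \<open>b \<cdot> a''\<close>, which lies in the topological center.\<close>

lemma weak_star_topology_eq_strong_operator_topology:
  "weak_star_topology = strong_operator_topology"
  unfolding weak_star_topology_def strong_operator_topology_def by simp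

lemma Blinfun_compose_apply:
  assumes "bounded_linear f"
  shows "blinfun_apply (Blinfun (\<lambda>x. blinfun_apply a (f x))) = (\<lambda>x. blinfun_apply a (f x))"
  using bounded_linear_compose[OF blinfun.bounded_linear_right assms]
  by (rule bounded_linear_Blinfun_apply)

lemma bounded_bilinear_Blinfun_transpose:
  assumes "bounded_bilinear g"
  shows "bounded_bilinear (\<lambda>a z. Blinfun (\<lambda>x. blinfun_apply a (g z x)))"
proof -
  have eq: "(\<lambda>a z. Blinfun (\<lambda>x. blinfun_apply a (g z x))) =
            (\<lambda>a z. a o\<^sub>L bounded_bilinear.prod_right g z)"
    by (intro ext blinfun_eqI)
       (simp add: Blinfun_compose_apply bounded_bilinear.bounded_linear_right[OF assms]
                  bounded_bilinear.prod_right.rep_eq[OF assms])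
  have "bounded_bilinear (\<lambda>a z. a o\<^sub>L bounded_bilinear.prod_right g z)"
    using bounded_bilinear.comp[OF bounded_bilinear_blinfun_compose bounded_linear_ident
          bounded_bilinear.bounded_linear_prod_right[OF assms]] .
  then show ?thesis unfolding eq .
qed

context
  fixes m :: "'x1::real_normed_vector \<Rightarrow> 'y::real_normed_vector \<Rightarrow> 'z::real_normed_vector"
  assumes bil: "bounded_bilinear m"
begin

lemma bounded_bilinear_arens_star: "bounded_bilinear (arens_star m)"
  using bounded_bilinear_Blinfun_transpose[OF bil] by (simp add: arens_star_def[abs_def])

lemma bounded_bilinear_arens_star2: "bounded_bilinear (arens_star2 m)"
  using bounded_bilinear_Blinfun_transpose[OF bounded_bilinear_arens_star]
  by (simp add: arens_star2_def[abs_def])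

lemma arens_star_apply: "blinfun_apply (arens_star m z' x) y = z' (m x y)"
  unfolding arens_star_def
  by (simp add: Blinfun_compose_apply bounded_bilinear.bounded_linear_right[OF bil])

lemma arens_star2_apply: "blinfun_apply (arens_star2 m y'' z') x = y'' (arens_star m z' x)"
  unfolding arens_star2_def
  by (simp add: Blinfun_compose_apply
        bounded_bilinear.bounded_linear_right[OF bounded_bilinear_arens_star])

lemma arens_star3_apply: "blinfun_apply (arens_star3 m x'' y'') z' = x'' (arens_star2 m y'' z')"
  unfolding arens_star3_def
  by (simp add: Blinfun_compose_apply
        bounded_bilinear.bounded_linear_right[OF bounded_bilinear_arens_star2])

end

lemma topological_center1_iff_coordinatewise:
  "a'' \<in> topological_center1 m \<longleftrightarrow>
   (\<forall>z'. continuous_map weak_star_topology euclidean (\<lambda>y''. blinfun_apply (arens_star3 m a'' y'') z'))"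
  unfolding topological_center1_def weak_star_topology_eq_strong_operator_topology mem_Collect_eq
  by (rule continuous_on_strong_operator_topo_iff_coordinatewise)

lemma canon_apply: "blinfun_apply (canon a) a' = a' a"
  unfolding canon_def by (simp add: bounded_linear_Blinfun_apply blinfun.bounded_linear_left)

lemma dual_right_act_eq_arens_star: "dual_right_act = arens_star"
  by (intro ext) (simp add: dual_right_act_def arens_star_def)

lemma functional_mult_eq_arens_star: "functional_mult = arens_star (*)"
  by (intro ext) (simp add: functional_mult_def arens_star_def)

lemma bidual_functional_mult_eq_arens_star2: "bidual_functional_mult = arens_star2 (*)"
  by (intro ext) (simp add: bidual_functional_mult_def arens_star2_def functional_mult_eq_arens_star)

lemma arens1_eq_arens_star3: "arens1 = arens_star3 (*)"
  by (intro ext) (simp add: arens1_def arens_star3_def bidual_functional_mult_eq_arens_star2)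

context
  fixes m :: "'a::real_normed_algebra \<Rightarrow> 'x::real_normed_vector \<Rightarrow> 'x"
  assumes bil: "bounded_bilinear m"
    and assoc: "\<And>a b x. m (a * b) x = m a (m b x)"
begin

lemma arens_star_arens_star: "arens_star m (arens_star m y' b) c = arens_star m y' (b * c)"
  by (intro blinfun_eqI) (simp add: arens_star_apply[OF bil] assoc)

lemma arens_star2_arens_star:
  "arens_star2 m y'' (arens_star m y' b) = arens_star (*) (arens_star2 m y'' y') b"
  by (intro blinfun_eqI)
     (simp add: arens_star2_apply[OF bil] arens_star_apply[OF bil] arens_star_apply[OF bounded_bilinear_mult]
                arens_star_arens_star)

lemma arens_star3_arens_star:
  "blinfun_apply (arens_star3 m a'' y'') (arens_star m y' b) =
   blinfun_apply (arens_star3 m (arens1 (canon b) a'') y'') y'"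
  by (simp add: arens_star3_apply[OF bil] arens1_eq_arens_star3 arens_star3_apply[OF bounded_bilinear_mult]
                canon_apply arens_star2_apply[OF bounded_bilinear_mult] arens_star2_arens_star)

end

theorem theorem2p1:
  fixes pl :: "'a::{real_normed_algebra,banach} \<Rightarrow> 'x::banach \<Rightarrow> 'x"
    and pr :: "'x \<Rightarrow> 'a \<Rightarrow> 'x"
  assumes bimod: "banach_bimodule pl pr"
    and factors: "\<forall>x'::'x \<Rightarrow>\<^sub>L real. \<exists>y' a. x' = dual_right_act pl y' a"
    and center: "\<forall>(a::'a) a''. arens1 (canon a) a'' \<in> topological_center1 pl"
  shows "topological_center1 pl = UNIV"
proof -
  have bil: "bounded_bilinear pl" and assoc: "\<And>a b x. pl (a * b) x = pl a (pl b x)"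
    using bimod unfolding banach_bimodule_def by auto
  have "a'' \<in> topological_center1 pl" for a''
    unfolding topological_center1_iff_coordinatewise
  proof
    fix x' :: "'x \<Rightarrow>\<^sub>L real"
    obtain y' b where x': "x' = arens_star pl y' b"
      using factors unfolding dual_right_act_eq_arens_star by blast
    have "continuous_map weak_star_topology euclidean
            (\<lambda>y''. blinfun_apply (arens_star3 pl (arens1 (canon b) a'') y'') y')"
      using center topological_center1_iff_coordinatewise by blast
    then show "continuous_map weak_star_topology euclidean
                 (\<lambda>y''. blinfun_apply (arens_star3 pl a'' y'') x')"
      by (simp add: x' arens_star3_arens_star[OF bil assoc])
  qed
  then show ?thesis by blast
qed

end
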